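(* Let $n\ge 3$ and let $P\subset\mathbb R^n$ be a polytope with $rB_2^n\subset P$ for some $r$ with $\frac{3\sqrt3}{\sqrt n}\le r\le 1$. Let $N=N(P,B_2^n)$ and let $\mathcal F$ be the set of facets of $P$. If $3\le N< e^{n/8}$, then \[ |\mathcal F|>\left(\frac{1}{2\left(1-r\sqrt{1-\frac{4\log N}{n}}\right)}\right)^{\frac{n-1}{2}}. \]
   Context: $B_2^n$ is the closed Euclidean unit ball in $\mathbb R^n$ centered at $0$. A polytope is the convex hull of finitely many points; a facet is an $(n-1)$-dimensional face. For convex bodies $K,T$, the covering number is $N(K,T)=\min\{N:\exists x_1,\dots,x_N\in\mathbb R^n,\ K\subset\bigcup_{i=1}^N(x_i+T)\}$. $\log$ is the natural logarithm. *)

theory Defs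
  imports "HOL-Analysis.Analysis"
begin

definition covering_number :: "'a::euclidean_space set \<Rightarrow> 'a set \<Rightarrow> nat" where
  "covering_number K T =
     (LEAST N. \<exists>X. finite X \<and> card X = N \<and> K \<subseteq> (\<Union>x\<in>X. (\<lambda>y. x + y) ` T))"

end

theory Submission
  imports Defs
begin

text \<open>
  Cover \<open>P\<close> by \<open>N\<close> unit balls and attach to every facet \<open>F\<close>, with outer unit normal
  \<open>u\<^sub>F\<close>, the ball of radius \<open>sqrt (R\<^sup>2 - r\<^sup>2)\<close> about \<open>r u\<^sub>F\<close>. These balls cover the ball of
  radius \<open>R\<close>: the ray from \<open>0\<close> to a point \<open>z\<close> outside \<open>P\<close> leaves \<open>P\<close> through a facet \<open>F\<close>,
  so \<open>u\<^sub>F \<bullet> z \<ge> r\<close>, and this cap of the ball of radius \<open>R\<close> lies in the ball about \<open>r u\<^sub>F\<close>.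
  Comparing volumes for \<open>R = 1/s\<close> with \<open>s = sqrt (1 - 4 log N / n)\<close> gives
  \<open>1 \<le> N s^n + |\<F>| sqrt (1 - (r s)\<^sup>2)^n\<close>, and \<open>N s^n \<le> 1/N \<le> 1/3\<close>. With \<open>a = r s\<close>, the
  elementary bound \<open>sqrt (1 - a\<^sup>2)^n < 2/3 (2 (1 - a)) powr ((n - 1) / 2)\<close>, valid for \<open>n \<ge> 9\<close>
  (which follows from \<open>3 \<le> N < exp (n / 8)\<close>), turns this into the claimed lower bound on \<open>|\<F>|\<close>.
\<close>

lemma covering_number_cball_attained:
  fixes K :: "'a::euclidean_space set"
  assumes "compact K" "0 < e"
  obtains X where "finite X" "card X = covering_number K (cball 0 e)"
    "K \<subseteq> (\<Union>x\<in>X. cball x e)"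
proof -
  have translate: "(\<lambda>y. x + y) ` cball 0 e = cball x e" for x :: 'a
    using cball_translation[of x 0 e] by (simp add: algebra_simps)
  have "K \<subseteq> (\<Union>x\<in>K. ball x e)"
    using assms(2) by auto
  then obtain X where "finite X" "K \<subseteq> (\<Union>x\<in>X. ball x e)"
    by (rule compactE_image[OF assms(1) open_ball])
  moreover have "(\<Union>x\<in>X. ball x e) \<subseteq> (\<Union>x\<in>X. cball x e)"
    using ball_subset_cball by blast
  ultimately have "\<exists>N X. finite X \<and> card X = N \<and> K \<subseteq> (\<Union>x\<in>X. (\<lambda>y. x + y) ` cball 0 e)"
    unfolding translate by blast
  from LeastI_ex[OF this] show ?thesis
    using that unfolding covering_number_def translate by blast
qed

lemma facet_of_polyhedron_unit_normal:
  fixes P :: "'a::euclidean_space set"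
  assumes "polyhedron P" "C facet_of P"
  obtains u b where "norm u = 1" "P \<subseteq> {x. u \<bullet> x \<le> b}" "C = P \<inter> {x. u \<bullet> x = b}"
proof -
  obtain a b where "a \<noteq> 0" "P \<subseteq> {x. a \<bullet> x \<le> b}" "C = P \<inter> {x. a \<bullet> x = b}"
    using facet_of_polyhedron[OF assms] by metis
  moreover have "{x. sgn a \<bullet> x \<le> b / norm a} = {x. a \<bullet> x \<le> b}"
    "{x. sgn a \<bullet> x = b / norm a} = {x. a \<bullet> x = b}"
    using \<open>a \<noteq> 0\<close> by (auto simp: sgn_div_norm field_simps)
  ultimately show ?thesis
    using that[of "sgn a" "b / norm a"] by (simp add: norm_sgn)
qed

lemma mem_cball_of_inner_ge:
  fixes z u :: "'a::real_inner"
  assumes "norm u = 1" "0 \<le> r" "norm z \<le> R" "r \<le> u \<bullet> z"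
  shows "z \<in> cball (r *\<^sub>R u) (sqrt (R\<^sup>2 - r\<^sup>2))"
proof -
  have "u \<bullet> u = 1"
    using assms(1) by (simp add: norm_eq_1)
  then have "(dist (r *\<^sub>R u) z)\<^sup>2 = (norm z)\<^sup>2 - 2 * r * (u \<bullet> z) + r\<^sup>2"
    unfolding dist_norm power2_norm_eq_inner
    by (simp add: inner_commute[of z u] power2_eq_square algebra_simps)
  also have "\<dots> \<le> R\<^sup>2 - r\<^sup>2"
    using mult_left_mono[OF assms(4) assms(2)] power_mono[OF assms(3) norm_ge_zero, of 2]
    by (simp add: power2_eq_square)
  finally show ?thesis
    by (simp add: real_le_rsqrt)
qed

lemma polyhedron_exit_facet:
  fixes P :: "'a::euclidean_space set"
  assumes "polyhedron P" "bounded P" "0 \<in> interior P" "z \<notin> P"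
    and normals: "\<And>C. C facet_of P \<Longrightarrow> P \<subseteq> {x. u C \<bullet> x \<le> b C} \<and> C = P \<inter> {x. u C \<bullet> x = b C}"
  obtains C where "C facet_of P" "b C \<le> u C \<bullet> z"
proof -
  have "z \<noteq> 0"
    using assms(3,4) interior_subset by blast
  then obtain d where "0 < d" and d_frontier: "d *\<^sub>R z \<in> frontier P"
    and d_interior: "\<And>e. 0 \<le> e \<Longrightarrow> e < d \<Longrightarrow> e *\<^sub>R z \<in> interior P"
    using ray_to_frontier[OF assms(2,3)] by (metis add_0)
  have "frontier P \<subseteq> P"
    using assms(1) polyhedron_imp_closed frontier_subset_closed by blast
  then have "d < 1"
    using d_frontier d_interior[of 1] interior_subset assms(4)
    by (metis linorder_neqE_linordered_idom scaleR_one subsetD zero_le_one)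
  have "rel_interior P = interior P"
    using assms(3) rel_interior_nonempty_interior by blast
  then have "d *\<^sub>R z \<in> \<Union>{C. C facet_of P}"
    using rel_boundary_of_polyhedron[OF assms(1)] d_frontier \<open>frontier P \<subseteq> P\<close>
    by (auto simp: frontier_def)
  then obtain C where C: "C facet_of P" "d *\<^sub>R z \<in> C"
    by blast
  have "0 \<in> P"
    using assms(3) interior_subset by blast
  then have "0 \<le> b C"
    using normals[OF C(1)] by auto
  have "C = P \<inter> {x. u C \<bullet> x = b C}"
    using normals[OF C(1)] by blast
  \<comment> \<open>\<open>C\<close> occurs on both sides, so this equation would make the simplifier loop\<close>
  with C(2) have "d *\<^sub>R z \<in> P \<inter> {x. u C \<bullet> x = b C}"
    by (rule back_subst)
  then have "u C \<bullet> (d *\<^sub>R z) = b C"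
    by blast
  then have eq: "b C = d * (u C \<bullet> z)"
    by simp
  then have "0 \<le> u C \<bullet> z"
    using \<open>0 \<le> b C\<close> \<open>0 < d\<close> by (simp add: zero_le_mult_iff)
  then have "b C \<le> u C \<bullet> z"
    unfolding eq using \<open>0 < d\<close> \<open>d < 1\<close> by (simp add: mult_left_le_one_le)
  with C(1) show ?thesis
    by (rule that)
qed

lemma cball_subset_polyhedron_Un_facet_caps:
  fixes P :: "'a::euclidean_space set"
  assumes "polyhedron P" "bounded P" "cball 0 r \<subseteq> P" "0 < r"
    and normals: "\<And>C. C facet_of P \<Longrightarrow>
      norm (u C) = 1 \<and> P \<subseteq> {x. u C \<bullet> x \<le> b C} \<and> C = P \<inter> {x. u C \<bullet> x = b C}"
  shows "cball 0 R \<subseteq> P \<union> (\<Union>C\<in>{F. F facet_of P}. cball (r *\<^sub>R u C) (sqrt (R\<^sup>2 - r\<^sup>2)))"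
proof
  fix z :: 'a
  assume z: "z \<in> cball 0 R"
  show "z \<in> P \<union> (\<Union>C\<in>{F. F facet_of P}. cball (r *\<^sub>R u C) (sqrt (R\<^sup>2 - r\<^sup>2)))"
  proof (cases "z \<in> P")
    case False
    have "0 \<in> interior P"
      using assms(3,4) by (meson ball_subset_cball mem_interior order_trans)
    moreover have "P \<subseteq> {x. u C \<bullet> x \<le> b C} \<and> C = P \<inter> {x. u C \<bullet> x = b C}"
      if "C facet_of P" for C
      using normals[OF that] by blast
    ultimately obtain C where C: "C facet_of P" "b C \<le> u C \<bullet> z"
      using polyhedron_exit_facet[OF assms(1,2) _ False] by blast
    have unit: "norm (u C) = 1"
      using normals[OF C(1)] by blast
    then have "r *\<^sub>R u C \<in> P"
      using assms(3,4) by auto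
    then have "u C \<bullet> (r *\<^sub>R u C) \<le> b C"
      using normals[OF C(1)] by blast
    then have "r \<le> b C"
      using unit by (simp add: norm_eq_1)
    then have "z \<in> cball (r *\<^sub>R u C) (sqrt (R\<^sup>2 - r\<^sup>2))"
      using mem_cball_of_inner_ge[of "u C" r z R] normals[OF C(1)] assms(4) z C(2) by simp
    with C(1) show ?thesis
      by blast
  qed simp
qed

lemma volume_le_sum_of_covering_cballs:
  fixes c :: "'i \<Rightarrow> 'a::euclidean_space"
  assumes "finite I" "cball a R \<subseteq> (\<Union>i\<in>I. cball (c i) (\<rho> i))" "0 \<le> R"
    and "\<And>i. i \<in> I \<Longrightarrow> 0 \<le> \<rho> i"
  shows "R ^ DIM('a) \<le> (\<Sum>i\<in>I. \<rho> i ^ DIM('a))"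
proof -
  have "measure lborel (cball a R) \<le> measure lborel (\<Union>i\<in>I. cball (c i) (\<rho> i))"
    using assms(1,2) by (intro measure_mono_fmeasurable fmeasurable_compact compact_UN) auto
  also have "\<dots> \<le> (\<Sum>i\<in>I. measure lborel (cball (c i) (\<rho> i)))"
    using assms(1) by (intro measure_UNION_le) auto
  finally have "unit_ball_vol DIM('a) * R ^ DIM('a) \<le> unit_ball_vol DIM('a) * (\<Sum>i\<in>I. \<rho> i ^ DIM('a))"
    using assms(3,4) by (simp add: content_cball sum_distrib_left)
  then show ?thesis
    by simp
qed

lemma polytope_cover_volume_bound:
  fixes P :: "'a::euclidean_space set"
  assumes "polytope P" "cball 0 r \<subseteq> P" "0 < r" "r \<le> R"
    and "finite X" "P \<subseteq> (\<Union>x\<in>X. cball x 1)"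
  shows "R ^ DIM('a) \<le> real (card X) + real (card {F. F facet_of P}) * sqrt (R\<^sup>2 - r\<^sup>2) ^ DIM('a)"
proof -
  define \<F> where "\<F> = {F. F facet_of P}"
  define \<rho> where "\<rho> = sqrt (R\<^sup>2 - r\<^sup>2)"
  have "polyhedron P" "bounded P" "finite \<F>"
    using assms(1) polytope_imp_polyhedron polytope_imp_bounded finite_polytope_facets
    unfolding \<F>_def by auto
  have "\<forall>C\<in>\<F>. \<exists>u b. norm u = 1 \<and> P \<subseteq> {x. u \<bullet> x \<le> b} \<and> C = P \<inter> {x. u \<bullet> x = b}"
    using facet_of_polyhedron_unit_normal[OF \<open>polyhedron P\<close>] unfolding \<F>_def by blast
  then obtain u b where normals: "\<And>C. C \<in> \<F> \<Longrightarrow>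
      norm (u C) = 1 \<and> P \<subseteq> {x. u C \<bullet> x \<le> b C} \<and> C = P \<inter> {x. u C \<bullet> x = b C}"
    by metis
  have "cball 0 R \<subseteq> P \<union> (\<Union>C\<in>\<F>. cball (r *\<^sub>R u C) \<rho>)"
    unfolding \<F>_def \<rho>_def
    by (rule cball_subset_polyhedron_Un_facet_caps[OF \<open>polyhedron P\<close> \<open>bounded P\<close> assms(2,3)
          normals[unfolded \<F>_def mem_Collect_eq]])
  also have "\<dots> \<subseteq> (\<Union>i\<in>X <+> \<F>. cball (case_sum id (\<lambda>C. r *\<^sub>R u C) i) (case_sum (\<lambda>_. 1) (\<lambda>_. \<rho>) i))"
    using assms(6) by force
  finally have "R ^ DIM('a) \<le> (\<Sum>i\<in>X <+> \<F>. case_sum (\<lambda>_. 1) (\<lambda>_. \<rho>) i ^ DIM('a))"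
    using assms(3,4) \<open>finite X\<close> \<open>finite \<F>\<close>
    by (intro volume_le_sum_of_covering_cballs) (auto simp: \<rho>_def power_mono split: sum.split)
  also have "\<dots> = real (card X) + real (card \<F>) * \<rho> ^ DIM('a)"
    using \<open>finite X\<close> \<open>finite \<F>\<close> by (simp add: sum.Plus comp_def)
  finally show ?thesis
    unfolding \<F>_def \<rho>_def .
qed

lemma polytope_cover_scaled_volume_bound:
  fixes P :: "'a::euclidean_space set"
  assumes "polytope P" "cball 0 r \<subseteq> P" "0 < r" "0 < s" "r * s \<le> 1"
    and "finite X" "P \<subseteq> (\<Union>x\<in>X. cball x 1)"
  shows "1 \<le> real (card X) * s ^ DIM('a)
    + real (card {F. F facet_of P}) * sqrt (1 - (r * s)\<^sup>2) ^ DIM('a)"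
proof -
  have "r \<le> 1 / s"
    using assms(4,5) by (simp add: field_simps)
  note volume = polytope_cover_volume_bound[OF assms(1-3) this assms(6,7)]
  have "s * sqrt ((1 / s)\<^sup>2 - r\<^sup>2) = sqrt (s\<^sup>2 * ((1 / s)\<^sup>2 - r\<^sup>2))"
    using assms(4) by (simp add: real_sqrt_mult)
  also have "s\<^sup>2 * ((1 / s)\<^sup>2 - r\<^sup>2) = 1 - (r * s)\<^sup>2"
    using assms(4) by (simp add: power2_eq_square field_simps)
  finally have scale: "s ^ DIM('a) * sqrt ((1 / s)\<^sup>2 - r\<^sup>2) ^ DIM('a) = sqrt (1 - (r * s)\<^sup>2) ^ DIM('a)"
    by (simp flip: power_mult_distrib)
  have "1 = s ^ DIM('a) * (1 / s) ^ DIM('a)"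
    using assms(4) by (simp add: power_one_over)
  also have "\<dots> \<le> s ^ DIM('a) * (real (card X)
      + real (card {F. F facet_of P}) * sqrt ((1 / s)\<^sup>2 - r\<^sup>2) ^ DIM('a))"
    using volume assms(4) by (intro mult_left_mono) auto
  also have "\<dots> = real (card X) * s ^ DIM('a)
      + real (card {F. F facet_of P}) * (s ^ DIM('a) * sqrt ((1 / s)\<^sup>2 - r\<^sup>2) ^ DIM('a))"
    by (simp add: algebra_simps)
  also have "\<dots> = real (card X) * s ^ DIM('a)
      + real (card {F. F facet_of P}) * sqrt (1 - (r * s)\<^sup>2) ^ DIM('a)"
    unfolding scale ..
  finally show ?thesis .
qed

lemma sqrt_one_minus_power_le_exp:
  fixes x :: real
  assumes "x \<le> 1"
  shows "sqrt (1 - x) ^ n \<le> exp (- (real n * x / 2))"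
proof -
  have "sqrt (1 - x) \<le> sqrt (exp (- x))"
    using exp_ge_add_one_self[of "- x"] by (simp add: real_sqrt_le_mono)
  also have "\<dots> = sqrt (exp (- x / 2) ^ 2)"
    by (simp flip: exp_of_nat_mult)
  also have "\<dots> = exp (- x / 2)"
    by simp
  finally have "sqrt (1 - x) ^ n \<le> exp (- x / 2) ^ n"
    using assms by (intro power_mono) auto
  then show ?thesis
    by (simp flip: exp_of_nat_mult)
qed

lemma mult_sqrt_one_minus_ln_power_le:
  fixes N :: real
  assumes "0 < N" "0 < n" "4 * ln N \<le> real n"
  shows "N * sqrt (1 - 4 * ln N / real n) ^ n \<le> 1 / N"
proof -
  have "sqrt (1 - 4 * ln N / real n) ^ n \<le> exp (- (real n * (4 * ln N / real n) / 2))"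
    using assms by (intro sqrt_one_minus_power_le_exp) simp
  also have "\<dots> = inverse (exp (ln N) ^ 2)"
    using assms(2) by (simp add: exp_minus flip: exp_of_nat_mult)
  finally have "sqrt (1 - 4 * ln N / real n) ^ n \<le> 1 / N\<^sup>2"
    using assms(1) by (simp add: inverse_eq_divide)
  then have "N * sqrt (1 - 4 * ln N / real n) ^ n \<le> N * (1 / N\<^sup>2)"
    using assms(1) by (intro mult_left_mono) auto
  then show ?thesis
    using assms(1) by (simp add: power2_eq_square)
qed

lemma sqrt_one_minus_log_ratio_bounds:
  fixes N :: real
  assumes "3 \<le> N" "N < exp (real n / 8)"
  defines "s \<equiv> sqrt (1 - 4 * ln N / real n)"
  shows "9 \<le> n" "0 < s" "s < 1" "N * s ^ n \<le> 1 / 3"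
proof -
  have "ln N < real n / 8"
    using assms(1,2) ln_less_cancel_iff[of N "exp (real n / 8)"] by simp
  have "0 < ln N"
    using assms(1) by simp
  have "exp 1 < exp (real n / 8)"
    using assms(1,2) exp_le by linarith
  then show "9 \<le> n"
    by simp
  then show "0 < s" "s < 1"
    using \<open>0 < ln N\<close> \<open>ln N < real n / 8\<close> by (auto simp: s_def field_simps)
  have "N * s ^ n \<le> 1 / N"
    unfolding s_def using assms(1) \<open>9 \<le> n\<close> \<open>ln N < real n / 8\<close>
    by (intro mult_sqrt_one_minus_ln_power_le) auto
  also have "\<dots> \<le> 1 / 3"
    using assms(1) by (simp add: divide_simps)
  finally show "N * s ^ n \<le> 1 / 3" .
qed

lemma four_mult_one_minus_power_less:
  fixes t :: real
  assumes "0 < t" "t < 1" "1 \<le> n"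
  shows "4 * t * (1 - t) ^ n < 4 / n"
proof -
  have "(1 - t) ^ n * (1 + real n * t) \<le> (1 - t) ^ n * (1 + t) ^ n"
    using Bernoulli_inequality[of t n] assms by (intro mult_left_mono) auto
  also have "\<dots> = (1 - t\<^sup>2) ^ n"
    by (simp add: power_mult_distrib[symmetric] power2_eq_square algebra_simps)
  also have "\<dots> \<le> 1"
    using assms by (intro power_le_one) (auto simp: power2_eq_square mult_le_one)
  finally have "(1 - t) ^ n \<le> 1 / (1 + real n * t)"
    using assms by (simp add: le_divide_eq add_pos_nonneg)
  then have "4 * t * (1 - t) ^ n \<le> 4 * t / (1 + real n * t)"
    using assms mult_left_mono[of _ _ "4 * t"] by fastforce
  also have "\<dots> < 4 / n"
    using assms by (simp add: divide_simps add_pos_nonneg)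
  finally show ?thesis .
qed

lemma sqrt_four_mult_power_less_powr:
  fixes t :: real
  assumes "0 < t" "t < 1" "9 \<le> n"
  shows "sqrt (4 * t * (1 - t)) ^ n < 2 / 3 * (4 * t) powr ((real n - 1) / 2)"
proof -
  have "4 * t * (1 - t) ^ n < 4 / 9"
    using four_mult_one_minus_power_less[of t n] assms
      frac_le[of 4 4 9 "real n"] by linarith
  have "(4 * t * (1 - t)) ^ n = (4 * t) ^ (n - 1) * (4 * t * (1 - t) ^ n)"
    using power_minus_mult[of n "4 * t"] assms(3) by (simp add: power_mult_distrib)
  then have "sqrt (4 * t * (1 - t)) ^ n = sqrt ((4 * t) ^ (n - 1) * (4 * t * (1 - t) ^ n))"
    by (metis real_sqrt_power)
  also have "\<dots> < sqrt ((4 * t) ^ (n - 1) * (2 / 3)\<^sup>2)"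
    using \<open>4 * t * (1 - t) ^ n < 4 / 9\<close> assms(1)
    by (simp add: power2_eq_square)
  also have "\<dots> = 2 / 3 * sqrt ((4 * t) powr real (n - 1))"
    using assms(1) by (simp add: real_sqrt_mult powr_realpow)
  also have "\<dots> = 2 / 3 * (4 * t) powr ((real n - 1) / 2)"
    using powr_half_sqrt_powr[of "4 * t" "real (n - 1)"] assms
    by (simp add: of_nat_diff del: of_nat_diff_if)
  finally show ?thesis .
qed

lemma inverse_powr_less_of_le_mult_sqrt_power:
  fixes a m :: real
  assumes "0 < a" "a < 1" "9 \<le> n" "2 / 3 \<le> m * sqrt (1 - a\<^sup>2) ^ n"
  shows "(1 / (2 * (1 - a))) powr ((real n - 1) / 2) < m"
proof (rule ccontr)
  define t where "t = (1 - a) / 2"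
  define Q where "Q = (4 * t) powr ((real n - 1) / 2)"
  have "0 < t" "t < 1" "0 < Q"
    using assms(1,2) by (auto simp: t_def Q_def)
  assume "\<not> ?thesis"
  moreover have "4 * t = 2 * (1 - a)"
    by (simp add: t_def)
  ultimately have "m \<le> 1 / Q"
    unfolding Q_def by (simp add: powr_divide)
  have "1 - a\<^sup>2 = 4 * t * (1 - t)"
    by (simp add: t_def power2_eq_square field_simps)
  then have "m * sqrt (1 - a\<^sup>2) ^ n \<le> 1 / Q * sqrt (4 * t * (1 - t)) ^ n"
    using \<open>m \<le> 1 / Q\<close> \<open>0 < t\<close> \<open>t < 1\<close>
    by (simp only:) (intro mult_right_mono zero_le_power real_sqrt_ge_zero; simp)
  also have "\<dots> = sqrt (4 * t * (1 - t)) ^ n / Q"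
    by simp
  also have "\<dots> < 2 / 3"
    using sqrt_four_mult_power_less_powr[OF \<open>0 < t\<close> \<open>t < 1\<close> assms(3)] \<open>0 < Q\<close>
    by (simp add: Q_def divide_simps)
  finally show False
    using assms(4) by simp
qed

theorem theorem1p1:
  fixes P :: "'a::euclidean_space set" and r :: real
  assumes "DIM('a) \<ge> 3"
    and "polytope P"
    and "cball 0 r \<subseteq> P"
    and "3 * sqrt 3 / sqrt (DIM('a)) \<le> r" and "r \<le> 1"
    and "3 \<le> covering_number P (cball 0 1)"
    and "real (covering_number P (cball 0 1)) < exp (real DIM('a) / 8)"
  shows "real (card {F. F facet_of P}) >
    (1 / (2 * (1 - r * sqrt (1 - 4 * ln (real (covering_number P (cball 0 1))) / real DIM('a)))))
      powr ((real DIM('a) - 1) / 2)"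
proof -
  define n where "n = DIM('a)"
  define N where "N = covering_number P (cball (0::'a) 1)"
  define s where "s = sqrt (1 - 4 * ln (real N) / real n)"
  \<comment> \<open>the lower bound on \<open>r\<close> is only needed for \<open>0 < r\<close>\<close>
  have "0 < 3 * sqrt 3 / sqrt (real n)"
    using assms(1) by (simp add: n_def)
  then have "0 < r"
    using assms(4) unfolding n_def by linarith
  have "9 \<le> n" "0 < s" "s < 1" "real N * s ^ n \<le> 1 / 3"
    using sqrt_one_minus_log_ratio_bounds[of "real N" n] assms(6,7)
    unfolding s_def N_def n_def by auto
  have "r * s \<le> s"
    using mult_right_mono[OF assms(5)] \<open>0 < s\<close> by simp
  then have "r * s < 1"
    using \<open>s < 1\<close> by linarith
  have "0 < r * s"
    using \<open>0 < r\<close> \<open>0 < s\<close> by simp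
  obtain X where X: "finite X" "card X = N" "P \<subseteq> (\<Union>x\<in>X. cball x 1)"
    using covering_number_cball_attained[OF polytope_imp_compact[OF assms(2)], of 1] N_def by auto
  have "1 \<le> real N * s ^ n + real (card {F. F facet_of P}) * sqrt (1 - (r * s)\<^sup>2) ^ n"
    using polytope_cover_scaled_volume_bound[OF assms(2,3) \<open>0 < r\<close> \<open>0 < s\<close> _ X(1,3)]
      \<open>r * s < 1\<close> X(2) unfolding n_def by simp
  with \<open>real N * s ^ n \<le> 1 / 3\<close>
  have "2 / 3 \<le> real (card {F. F facet_of P}) * sqrt (1 - (r * s)\<^sup>2) ^ n"
    by linarith
  then have "(1 / (2 * (1 - r * s))) powr ((real n - 1) / 2) < real (card {F. F facet_of P})"
    by (rule inverse_powr_less_of_le_mult_sqrt_power[OF \<open>0 < r * s\<close> \<open>r * s < 1\<close> \<open>9 \<le> n\<close>])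
  then show ?thesis
    by (simp only: s_def N_def n_def)
qed

end
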